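(* Let $G=PL_\delta(\mathbb{R}_{+})$ and $H=\{f\in G : \lim_{x\to\infty} f(x)/x = 1\}$. Then the center of the quotient group $G/H$ is trivial.
   Context: A homeomorphism $f$ of $[0,\infty)$ is piecewise linear if its set $B(f)$ of breakpoints (points where $f$ is not differentiable) is discrete and $f$ is affine on each complementary interval. Its set of slopes is $\Lambda(f)=\{f'(t): t\notin B(f)\}$; $\Lambda(f)$ is bounded if there is $K>1$ with $K^{-1}<|\lambda|<K$ for all $\lambda\in\Lambda(f)$. $PL_\delta(\mathbb{R}_{+})$ denotes the group (under composition) of piecewise-linear homeomorphisms of $[0,\infty)$ with bounded set of slopes. $H$ is a normal subgroup of $G$. *)

theory Defs
  imports "HOL-Analysis.Analysis" "HOL-Algebra.Coset"
begin

definition breakpoints :: "(real \<Rightarrow> real) \<Rightarrow> real set" where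
  "breakpoints f = {t \<in> {0..}. \<not> f differentiable (at t within {0..})}"

definition slopes :: "(real \<Rightarrow> real) \<Rightarrow> real set" where
  "slopes f = {l. \<exists>t \<in> {0..} - breakpoints f. (f has_real_derivative l) (at t within {0..})}"

text \<open>Piecewise linear on [0,oo): breakpoint set discrete (closed discrete, i.e. finitely many
  in every bounded interval), and f affine on every interval free of breakpoints.\<close>
definition piecewise_linear :: "(real \<Rightarrow> real) \<Rightarrow> bool" where
  "piecewise_linear f \<longleftrightarrow>
     (\<forall>M. finite (breakpoints f \<inter> {0..M})) \<and>
     (\<forall>a b. 0 \<le> a \<longrightarrow> a < b \<longrightarrow> {a<..<b} \<inter> breakpoints f = {} \<longrightarrow>
        (\<exists>m c. \<forall>x \<in> {a..b}. f x = m * x + c))"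

definition bounded_slopes :: "(real \<Rightarrow> real) \<Rightarrow> bool" where
  "bounded_slopes f \<longleftrightarrow> (\<exists>K>1. \<forall>l \<in> slopes f. inverse K < \<bar>l\<bar> \<and> \<bar>l\<bar> < K)"

text \<open>Elements of PL_delta(R_+), represented as functions real => real that are the identity
  on the negative reals (normalisation so that composition is the group law).\<close>
definition PLd_set :: "(real \<Rightarrow> real) set" where
  "PLd_set = {f. (\<exists>g. homeomorphism {0..} {0..} f g) \<and> piecewise_linear f \<and> bounded_slopes f
                 \<and> (\<forall>x<0. f x = x)}"

definition PLd :: "(real \<Rightarrow> real) monoid" where
  "PLd = \<lparr>carrier = PLd_set, mult = (\<circ>), one = id\<rparr>"

definition H_asym :: "(real \<Rightarrow> real) set" where
  "H_asym = {f \<in> PLd_set. ((\<lambda>x. f x / x) \<longlongrightarrow> 1) at_top}"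

definition group_center :: "('a, 'b) monoid_scheme \<Rightarrow> 'a set" where
  "group_center G = {z \<in> carrier G. \<forall>g \<in> carrier G. z \<otimes>\<^bsub>G\<^esub> g = g \<otimes>\<^bsub>G\<^esub> z}"

end

theory Submission
  imports Defs
begin

text \<open>If \<open>f \<in> G\<close> is not in \<open>H\<close>, then after possibly passing to \<open>f\<inverse>\<close> there is \<open>\<delta> > 0\<close> with
  \<open>f x \<ge> (1 + \<delta>) x\<close> for arbitrarily large \<open>x\<close>. Pick such points \<open>s\<^sub>n\<close>, spread so far apart that the
  intervals \<open>[s\<^sub>n, 2 L s\<^sub>n]\<close> are disjoint, where \<open>L\<close> exceeds the slopes of \<open>f\<close>, and let \<open>g\<close> be the
  identity except for a bump on each interval fixing \<open>s\<^sub>n\<close> and having slope \<open>2\<close> on \<open>[s\<^sub>n, L s\<^sub>n]\<close>.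
  If the cosets of \<open>f\<close> and \<open>g\<close> commuted, then \<open>g \<circ> f = h \<circ> f \<circ> g\<close> for some \<open>h \<in> H\<close>; evaluating
  at \<open>s\<^sub>n\<close> gives \<open>h y / y = 2 - s\<^sub>n / y \<ge> 1 + \<delta> / (1 + \<delta>)\<close> along \<open>y = f s\<^sub>n \<rightarrow> \<infinity>\<close>,
  contradicting \<open>h y / y \<rightarrow> 1\<close>.\<close>

lemma le_if_locally_mono:
  fixes h :: "real \<Rightarrow> real"
  assumes ab: "a \<le> b"
    and loc: "\<And>t. a \<le> t \<Longrightarrow> t \<le> b \<Longrightarrow> \<exists>e>0. (\<forall>x. a \<le> x \<and> t - e \<le> x \<and> x \<le> t \<longrightarrow> h x \<le> h t)
                 \<and> (\<forall>x. t \<le> x \<and> x \<le> t + e \<and> x \<le> b \<longrightarrow> h t \<le> h x)"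
  shows "h a \<le> h b"
proof (rule ccontr)
  assume nb: "\<not> h a \<le> h b"
  define C where "C = {x. a \<le> x \<and> x \<le> b \<and> h x < h a}"
  define c where "c = Inf C"
  have bC: "b \<in> C" using nb ab by (auto simp: C_def)
  have bdd: "bdd_below C" unfolding C_def by (rule bdd_belowI[of _ a]) auto
  have c_le: "\<And>y. y \<in> C \<Longrightarrow> c \<le> y" unfolding c_def using bdd by (rule cInf_lower[rotated])
  have ac: "a \<le> c" unfolding c_def using bC by (intro cInf_greatest) (auto simp: C_def)
  have cb: "c \<le> b" using c_le[OF bC] .
  have below_c: "\<And>x. a \<le> x \<Longrightarrow> x < c \<Longrightarrow> h a \<le> h x"
    using c_le cb by (force simp: C_def)
  obtain e where e: "e > 0" and left: "\<forall>x. a \<le> x \<and> c - e \<le> x \<and> x \<le> c \<longrightarrow> h x \<le> h c"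
    and right: "\<forall>x. c \<le> x \<and> x \<le> c + e \<and> x \<le> b \<longrightarrow> h c \<le> h x"
    using loc[OF ac cb] by blast
  show False
  proof (cases "h c < h a")
    case True
    then have "a < c" using ac by (cases "a = c") auto
    define x where "x = max a (c - e/2)"
    have "a \<le> x" "x < c" "c - e \<le> x" using \<open>a < c\<close> e by (auto simp: x_def)
    then show False using below_c left True by force
  next
    case False
    then have "c < b" using bC cb by (cases "c = b") (auto simp: C_def)
    define e' where "e' = min e (b - c)"
    have "c + e' \<le> Inf C"
    proof (rule cInf_greatest)
      show "C \<noteq> {}" using bC by auto
      fix y assume y: "y \<in> C"
      show "c + e' \<le> y"
      proof (rule ccontr)
        assume "\<not> c + e' \<le> y"
        then have "h c \<le> h y" using right c_le[OF y] by (auto simp: e'_def)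
        then show False using False y by (auto simp: C_def)
      qed
    qed
    then show False using e \<open>c < b\<close> by (auto simp: c_def e'_def)
  qed
qed

lemma increment_bounds_if_local_slopes:
  fixes f :: "real \<Rightarrow> real"
  assumes yx: "y \<le> x"
    and loc: "\<And>t. y \<le> t \<Longrightarrow> t \<le> x \<Longrightarrow> \<exists>e>0. \<exists>m1 m2. c \<le> m1 \<and> m1 \<le> C \<and> c \<le> m2 \<and> m2 \<le> C
       \<and> (\<forall>z. y \<le> z \<and> t - e \<le> z \<and> z \<le> t \<longrightarrow> f z = f t + m1 * (z - t))
       \<and> (\<forall>z. t \<le> z \<and> z \<le> t + e \<longrightarrow> f z = f t + m2 * (z - t))"
  shows "c * (x - y) \<le> f x - f y" and "f x - f y \<le> C * (x - y)"
proof -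
  have "(\<lambda>z. f z - c * z) y \<le> (\<lambda>z. f z - c * z) x \<and> (\<lambda>z. C * z - f z) y \<le> (\<lambda>z. C * z - f z) x"
  proof (intro conjI le_if_locally_mono[OF yx])
    fix t assume t: "y \<le> t" "t \<le> x"
    obtain e m1 m2 where e: "e > 0" and m: "c \<le> m1" "m1 \<le> C" "c \<le> m2" "m2 \<le> C"
      and l: "\<forall>z. y \<le> z \<and> t - e \<le> z \<and> z \<le> t \<longrightarrow> f z = f t + m1 * (z - t)"
      and r: "\<forall>z. t \<le> z \<and> z \<le> t + e \<longrightarrow> f z = f t + m2 * (z - t)"
      using loc[OF t] by blast
    have "f z - c * z \<le> f t - c * t \<and> C * z - f z \<le> C * t - f t"
      if "y \<le> z" "t - e \<le> z" "z \<le> t" for z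
      using l[rule_format, of z] that mult_right_mono_neg[OF m(1), of "z - t"]
        mult_right_mono_neg[OF m(2), of "z - t"] by (simp add: algebra_simps)
    moreover have "f t - c * t \<le> f z - c * z \<and> C * t - f t \<le> C * z - f z"
      if "t \<le> z" "z \<le> t + e" for z
      using r[rule_format, of z] that mult_right_mono[OF m(3), of "z - t"]
        mult_right_mono[OF m(4), of "z - t"] by (simp add: algebra_simps)
    ultimately show "\<exists>e>0. (\<forall>z. y \<le> z \<and> t - e \<le> z \<and> z \<le> t \<longrightarrow> f z - c * z \<le> f t - c * t)
        \<and> (\<forall>z. t \<le> z \<and> z \<le> t + e \<and> z \<le> x \<longrightarrow> f t - c * t \<le> f z - c * z)"
      and "\<exists>e>0. (\<forall>z. y \<le> z \<and> t - e \<le> z \<and> z \<le> t \<longrightarrow> C * z - f z \<le> C * t - f t)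
        \<and> (\<forall>z. t \<le> z \<and> z \<le> t + e \<and> z \<le> x \<longrightarrow> C * t - f t \<le> C * z - f z)"
      using e by blast+
  qed
  then show "c * (x - y) \<le> f x - f y" and "f x - f y \<le> C * (x - y)"
    by (simp_all add: algebra_simps)
qed

section \<open>Maps affine on both sides of each point, with slopes in \<open>[1/K, K]\<close>\<close>

definition affine_sides_at :: "(real \<Rightarrow> real) \<Rightarrow> real \<Rightarrow> real \<Rightarrow> bool" where
  "affine_sides_at f t K \<longleftrightarrow> (\<exists>e>0. \<exists>m1 m2. 1/K \<le> m1 \<and> m1 \<le> K \<and> 1/K \<le> m2 \<and> m2 \<le> K
     \<and> (\<forall>x. 0 \<le> x \<and> t - e \<le> x \<and> x \<le> t \<longrightarrow> f x = f t + m1 * (x - t))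
     \<and> (\<forall>x. t \<le> x \<and> x \<le> t + e \<longrightarrow> f x = f t + m2 * (x - t)))"

text \<open>\<open>PLd_set\<close> consists exactly of the maps with \<open>PL_bounded f K\<close> for some \<open>K\<close>
  (\<open>PLd_set_iff\<close>); all computations below work with this local description.\<close>
definition PL_bounded :: "(real \<Rightarrow> real) \<Rightarrow> real \<Rightarrow> bool" where
  "PL_bounded f K \<longleftrightarrow> 1 \<le> K \<and> (\<forall>t\<ge>0. affine_sides_at f t K) \<and> f 0 = 0 \<and> (\<forall>x<0. f x = x)"

lemma affine_sides_atI:
  assumes "e > 0" "1/K \<le> m1" "m1 \<le> K" "1/K \<le> m2" "m2 \<le> K"
    "\<And>x. 0 \<le> x \<Longrightarrow> t - e \<le> x \<Longrightarrow> x \<le> t \<Longrightarrow> f x = f t + m1 * (x - t)"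
    "\<And>x. t \<le> x \<Longrightarrow> x \<le> t + e \<Longrightarrow> f x = f t + m2 * (x - t)"
  shows "affine_sides_at f t K"
  unfolding affine_sides_at_def using assms by blast

lemma affine_sides_atE:
  assumes "affine_sides_at f t K"
  obtains e m1 m2 where "e > 0" "1/K \<le> m1" "m1 \<le> K" "1/K \<le> m2" "m2 \<le> K"
    "\<And>x. 0 \<le> x \<Longrightarrow> t - e \<le> x \<Longrightarrow> x \<le> t \<Longrightarrow> f x = f t + m1 * (x - t)"
    "\<And>x. t \<le> x \<Longrightarrow> x \<le> t + e \<Longrightarrow> f x = f t + m2 * (x - t)"
  using assms unfolding affine_sides_at_def by blast

lemma affine_sides_at_pieces:
  assumes "e > 0" "1/K \<le> m1" "m1 \<le> K" "1/K \<le> m2" "m2 \<le> K"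
    and left: "\<And>x. 0 \<le> x \<Longrightarrow> t - e \<le> x \<Longrightarrow> x \<le> t \<Longrightarrow> f x = m1 * x + c1"
    and right: "\<And>x. t \<le> x \<Longrightarrow> x \<le> t + e \<Longrightarrow> f x = m2 * x + c2"
  shows "affine_sides_at f t K"
proof (rule affine_sides_atI[OF assms(1-5)])
  have "f t = m2 * t + c2" using right \<open>e > 0\<close> by simp
  then show "f x = f t + m2 * (x - t)" if "t \<le> x" "x \<le> t + e" for x
    using right[OF that] by (simp add: algebra_simps)
  show "f x = f t + m1 * (x - t)" if "0 \<le> x" "t - e \<le> x" "x \<le> t" for x
    using left[OF that] left[of t] that by (simp add: algebra_simps)
qed

lemma PL_bounded_K: "PL_bounded f K \<Longrightarrow> 1 \<le> K"
  and PL_bounded_0: "PL_bounded f K \<Longrightarrow> f 0 = 0"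
  and PL_bounded_neg: "PL_bounded f K \<Longrightarrow> x < 0 \<Longrightarrow> f x = x"
  and PL_bounded_affine_sides_at: "PL_bounded f K \<Longrightarrow> 0 \<le> t \<Longrightarrow> affine_sides_at f t K"
  by (simp_all add: PL_bounded_def)

lemma PL_bounded_increment_bounds:
  assumes f: "PL_bounded f K" and y: "0 \<le> y" and yx: "y \<le> x"
  shows "(x - y) / K \<le> f x - f y" and "f x - f y \<le> K * (x - y)"
proof -
  have sides: "\<exists>e>0. \<exists>m1 m2. 1 / K \<le> m1 \<and> m1 \<le> K \<and> 1 / K \<le> m2 \<and> m2 \<le> K
       \<and> (\<forall>z. y \<le> z \<and> t - e \<le> z \<and> z \<le> t \<longrightarrow> f z = f t + m1 * (z - t))
       \<and> (\<forall>z. t \<le> z \<and> z \<le> t + e \<longrightarrow> f z = f t + m2 * (z - t))" if "y \<le> t" for t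
    using PL_bounded_affine_sides_at[OF f, of t] y that unfolding affine_sides_at_def
    by (meson order_trans)
  show "(x - y) / K \<le> f x - f y" "f x - f y \<le> K * (x - y)"
    using increment_bounds_if_local_slopes[OF yx sides] by simp_all
qed

lemma PL_bounded_lower: "PL_bounded f K \<Longrightarrow> 0 \<le> x \<Longrightarrow> x / K \<le> f x"
  and PL_bounded_upper: "PL_bounded f K \<Longrightarrow> 0 \<le> x \<Longrightarrow> f x \<le> K * x"
  using PL_bounded_increment_bounds[of f K 0 x] by (simp_all add: PL_bounded_0)

lemma PL_bounded_pos: "PL_bounded f K \<Longrightarrow> 0 < x \<Longrightarrow> 0 < f x"
  using PL_bounded_lower[of f K x] PL_bounded_K[of f K] by (smt (verit) divide_pos_pos)

lemma PL_bounded_nonneg: "PL_bounded f K \<Longrightarrow> 0 \<le> x \<Longrightarrow> 0 \<le> f x"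
  using PL_bounded_pos[of f K x] PL_bounded_0[of f K] by (cases "x = 0") auto

lemma PL_bounded_strict_mono: "PL_bounded f K \<Longrightarrow> 0 \<le> y \<Longrightarrow> y < x \<Longrightarrow> f y < f x"
  using PL_bounded_increment_bounds(1)[of f K y x] PL_bounded_K[of f K] by (smt (verit) divide_pos_pos)

lemma PL_bounded_le_iff: "PL_bounded f K \<Longrightarrow> 0 \<le> y \<Longrightarrow> 0 \<le> x \<Longrightarrow> f y \<le> f x \<longleftrightarrow> y \<le> x"
  using PL_bounded_strict_mono[of f K y x] PL_bounded_strict_mono[of f K x y] by force

lemma PL_bounded_lipschitz:
  assumes f: "PL_bounded f K" and "0 \<le> x" "0 \<le> y"
  shows "\<bar>f x - f y\<bar> \<le> K * \<bar>x - y\<bar>"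
proof (cases "x \<le> y")
  case True
  then show ?thesis
    using PL_bounded_increment_bounds(2)[OF f \<open>0 \<le> x\<close> True] PL_bounded_le_iff[OF f \<open>0 \<le> x\<close> \<open>0 \<le> y\<close>]
    by simp
next
  case False
  then show ?thesis
    using PL_bounded_increment_bounds(2)[OF f \<open>0 \<le> y\<close>, of x] PL_bounded_le_iff[OF f \<open>0 \<le> y\<close> \<open>0 \<le> x\<close>]
    by simp
qed

lemma affine_sides_at_continuous:
  assumes "affine_sides_at f t K"
  shows "continuous (at t within {0..}) f"
proof -
  obtain e m1 m2 where e: "e > 0"
    and l: "\<And>x. 0 \<le> x \<Longrightarrow> t - e \<le> x \<Longrightarrow> x \<le> t \<Longrightarrow> f x = f t + m1 * (x - t)"
    and r: "\<And>x. t \<le> x \<Longrightarrow> x \<le> t + e \<Longrightarrow> f x = f t + m2 * (x - t)"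
    using assms by (elim affine_sides_atE) blast
  have "\<bar>f x - f t\<bar> \<le> (\<bar>m1\<bar> + \<bar>m2\<bar>) * \<bar>x - t\<bar>" if "0 \<le> x" "\<bar>x - t\<bar> < e" for x
  proof (cases "x \<le> t")
    case True
    then have "\<bar>f x - f t\<bar> = \<bar>m1\<bar> * \<bar>x - t\<bar>" using l[of x] that by (simp add: abs_mult)
    then show ?thesis by (simp add: mult_right_mono)
  next
    case False
    then have "\<bar>f x - f t\<bar> = \<bar>m2\<bar> * \<bar>x - t\<bar>" using r[of x] that by (simp add: abs_mult)
    then show ?thesis by (simp add: mult_right_mono)
  qed
  then have "eventually (\<lambda>x. norm (f x - f t) \<le> (\<bar>m1\<bar> + \<bar>m2\<bar>) * \<bar>x - t\<bar>) (at t within {0..})"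
    unfolding eventually_at using e by (intro exI[of _ e]) (auto simp: dist_real_def)
  moreover have "((\<lambda>x. (\<bar>m1\<bar> + \<bar>m2\<bar>) * \<bar>x - t\<bar>) \<longlongrightarrow> 0) (at t within {0..})"
    by (intro tendsto_eq_intros) auto
  ultimately have "((\<lambda>x. f x - f t) \<longlongrightarrow> 0) (at t within {0..})"
    by (rule Lim_null_comparison)
  then show ?thesis by (simp add: continuous_within Lim_null[symmetric])
qed

lemma PL_bounded_continuous_on:
  assumes "PL_bounded f K" shows "continuous_on {0..} f"
  unfolding continuous_on_eq_continuous_within
  using affine_sides_at_continuous PL_bounded_affine_sides_at[OF assms] by auto

lemma affine_sides_at_comp:
  assumes f: "PL_bounded f K1" and g: "PL_bounded g K2" and t: "0 \<le> t"
  shows "affine_sides_at (f \<circ> g) t (K1 * K2)"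
proof -
  have K1: "K1 \<ge> 1" and K2: "K2 \<ge> 1" using f g PL_bounded_K by auto
  obtain e m1 m2 where e: "e > 0" and m: "1/K2 \<le> m1" "m1 \<le> K2" "1/K2 \<le> m2" "m2 \<le> K2"
      and l: "\<And>x. 0 \<le> x \<Longrightarrow> t - e \<le> x \<Longrightarrow> x \<le> t \<Longrightarrow> g x = g t + m1 * (x - t)"
      and r: "\<And>x. t \<le> x \<Longrightarrow> x \<le> t + e \<Longrightarrow> g x = g t + m2 * (x - t)"
    using PL_bounded_affine_sides_at[OF g t] by (erule affine_sides_atE)
  obtain e' n1 n2 where e': "e' > 0" and n: "1/K1 \<le> n1" "n1 \<le> K1" "1/K1 \<le> n2" "n2 \<le> K1"
      and l': "\<And>x. 0 \<le> x \<Longrightarrow> g t - e' \<le> x \<Longrightarrow> x \<le> g t \<Longrightarrow> f x = f (g t) + n1 * (x - g t)"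
      and r': "\<And>x. g t \<le> x \<Longrightarrow> x \<le> g t + e' \<Longrightarrow> f x = f (g t) + n2 * (x - g t)"
    using PL_bounded_affine_sides_at[OF f PL_bounded_nonneg[OF g t]] by (erule affine_sides_atE)
  \<comment> \<open>On the \<open>d\<close>-neighbourhood of \<open>t\<close>, \<open>g\<close> stays in the \<open>e'\<close>-neighbourhood of \<open>g t\<close>.\<close>
  define d where "d = min e (e' / K2)"
  have d: "d > 0" "d \<le> e" "K2 * d \<le> e'" using e e' K2 by (auto simp: d_def min_def field_simps)
  have pos: "0 < 1/K1" "0 < 1/K2" using K1 K2 by auto
  have m0: "0 \<le> m1" "0 \<le> m2" using m pos by linarith+
  have b1: "1 / (K1 * K2) \<le> n1 * m1" "n1 * m1 \<le> K1 * K2"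
    using mult_mono[of "1/K1" n1 "1/K2" m1] mult_mono[of n1 K1 m1 K2] n m pos by auto
  have b2: "1 / (K1 * K2) \<le> n2 * m2" "n2 * m2 \<le> K1 * K2"
    using mult_mono[of "1/K1" n2 "1/K2" m2] mult_mono[of n2 K1 m2 K2] n m pos by auto
  show ?thesis
  proof (rule affine_sides_atI[OF d(1) b1 b2])
    fix x assume x: "0 \<le> x" "t - d \<le> x" "x \<le> t"
    have gx: "g x = g t + m1 * (x - t)" using x d by (intro l) auto
    have "m1 * (t - x) \<le> K2 * d" using m pos x by (intro mult_mono) auto
    moreover have "0 \<le> m1 * (t - x)" using m0 x by simp
    ultimately have "g t - e' \<le> g x" "g x \<le> g t" using gx d by (simp_all add: algebra_simps)
    then have "f (g x) = f (g t) + n1 * (g x - g t)" using PL_bounded_nonneg[OF g x(1)] by (intro l')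
    then show "(f \<circ> g) x = (f \<circ> g) t + n1 * m1 * (x - t)" using gx by simp
  next
    fix x assume x: "t \<le> x" "x \<le> t + d"
    have gx: "g x = g t + m2 * (x - t)" using x d by (intro r) auto
    have "m2 * (x - t) \<le> K2 * d" using m pos x by (intro mult_mono) auto
    moreover have "0 \<le> m2 * (x - t)" using m0 x by simp
    ultimately have "g t \<le> g x" "g x \<le> g t + e'" using gx d by (simp_all add: algebra_simps)
    then have "f (g x) = f (g t) + n2 * (g x - g t)" by (intro r')
    then show "(f \<circ> g) x = (f \<circ> g) t + n2 * m2 * (x - t)" using gx by simp
  qed
qed

lemma PL_bounded_comp:
  assumes f: "PL_bounded f K1" and g: "PL_bounded g K2"
  shows "PL_bounded (f \<circ> g) (K1 * K2)"
  using affine_sides_at_comp[OF f g] PL_bounded_K[OF f] PL_bounded_K[OF g] mult_mono[of 1 K1 1 K2]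
    PL_bounded_0[OF f] PL_bounded_0[OF g] PL_bounded_neg[OF f] PL_bounded_neg[OF g]
  by (simp add: PL_bounded_def)

subsection \<open>Inverses\<close>

definition halfline_inv :: "(real \<Rightarrow> real) \<Rightarrow> real \<Rightarrow> real" where
  "halfline_inv f y = (if y < 0 then y else (THE x. 0 \<le> x \<and> f x = y))"

lemma PL_bounded_surj:
  assumes f: "PL_bounded f K" and y: "0 \<le> y"
  obtains x where "0 \<le> x" "f x = y"
proof -
  have K: "K \<ge> 1" using PL_bounded_K[OF f] .
  have "f 0 \<le> y" "y \<le> f (K * y)" "0 \<le> K * y"
    using PL_bounded_0[OF f] PL_bounded_lower[OF f, of "K * y"] K y by simp_all
  moreover have "continuous_on {0..K * y} f"
    using PL_bounded_continuous_on[OF f] by (rule continuous_on_subset) auto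
  ultimately obtain x where "0 \<le> x" "f x = y" using IVT'[of f 0 y "K * y"] by blast
  then show ?thesis by (rule that)
qed

lemma halfline_inv_solution:
  assumes f: "PL_bounded f K" and y: "0 \<le> y"
  shows "0 \<le> halfline_inv f y" and "f (halfline_inv f y) = y"
proof -
  obtain x where x: "0 \<le> x" "f x = y" using PL_bounded_surj[OF f y] .
  have unique: "x' = x" if "0 \<le> x' \<and> f x' = y" for x'
    using PL_bounded_le_iff[OF f _ x(1), of x'] PL_bounded_le_iff[OF f x(1), of x'] that x(2) by auto
  have "(THE x. 0 \<le> x \<and> f x = y) = x"
    using x by (intro the_equality unique) auto
  then show "0 \<le> halfline_inv f y" "f (halfline_inv f y) = y"
    using x y by (simp_all add: halfline_inv_def)
qed

lemma halfline_inv_left: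
  assumes f: "PL_bounded f K" shows "halfline_inv f (f x) = x"
proof (cases "x < 0")
  case True then show ?thesis using PL_bounded_neg[OF f True] by (simp add: halfline_inv_def)
next
  case False
  then have x: "0 \<le> x" by simp
  note inv = halfline_inv_solution[OF f PL_bounded_nonneg[OF f x]]
  show ?thesis using PL_bounded_le_iff[OF f inv(1) x] PL_bounded_le_iff[OF f x inv(1)] inv(2) by auto
qed

lemma halfline_inv_right:
  assumes f: "PL_bounded f K" shows "f (halfline_inv f y) = y"
  using halfline_inv_solution[OF f, of y] PL_bounded_neg[OF f, of y]
  by (cases "y < 0") (auto simp: halfline_inv_def)

lemma affine_sides_at_halfline_inv:
  assumes f: "PL_bounded f K" and y: "0 \<le> y" shows "affine_sides_at (halfline_inv f) y K"
proof -
  have K: "K \<ge> 1" using PL_bounded_K[OF f] .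
  define x0 where "x0 = halfline_inv f y"
  have x0: "0 \<le> x0" "f x0 = y" using halfline_inv_solution[OF f y] by (auto simp: x0_def)
  obtain e m1 m2 where e: "e > 0" and m: "1/K \<le> m1" "m1 \<le> K" "1/K \<le> m2" "m2 \<le> K"
    and l: "\<And>x. 0 \<le> x \<Longrightarrow> x0 - e \<le> x \<Longrightarrow> x \<le> x0 \<Longrightarrow> f x = f x0 + m1 * (x - x0)"
    and r: "\<And>x. x0 \<le> x \<Longrightarrow> x \<le> x0 + e \<Longrightarrow> f x = f x0 + m2 * (x - x0)"
    using PL_bounded_affine_sides_at[OF f x0(1)] by (erule affine_sides_atE)
  have mpos: "m1 > 0" "m2 > 0" using m K by (auto intro: less_le_trans[of 0 "1/K"])
  have em: "e / K \<le> m1 * e" "e / K \<le> m2 * e"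
    using m e by (auto simp: divide_inverse intro!: mult_right_mono[of "1/K" _ e, simplified])
  have eK: "e / K > 0" using e K by simp
  have mb: "1 / K \<le> 1 / m1" "1 / m1 \<le> K" "1 / K \<le> 1 / m2" "1 / m2 \<le> K"
    using m mpos K by (auto simp: field_simps)
  \<comment> \<open>The image under \<open>f\<close> of the \<open>e\<close>-neighbourhood of \<open>x0\<close> contains the \<open>e/K\<close>-neighbourhood of \<open>y\<close>.\<close>
  show ?thesis
  proof (rule affine_sides_atI[OF eK mb])
    fix z assume z: "0 \<le> z" "y - e / K \<le> z" "z \<le> y"
    define x where "x = halfline_inv f z"
    have x: "0 \<le> x" "f x = z" using halfline_inv_solution[OF f z(1)] by (auto simp: x_def)
    have "x \<le> x0" using PL_bounded_le_iff[OF f x(1) x0(1)] x x0 z by auto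
    moreover have "x0 - e \<le> x"
    proof (rule ccontr)
      assume c: "\<not> x0 - e \<le> x"
      then have "0 \<le> x0 - e" using x by auto
      then have "f x < f (x0 - e)" using PL_bounded_strict_mono[OF f x(1)] c by auto
      also have "f (x0 - e) = y - m1 * e" using l[of "x0 - e"] \<open>0 \<le> x0 - e\<close> e x0 by auto
      finally show False using x z em by auto
    qed
    ultimately have "z = y + m1 * (x - x0)" using l[of x] x x0 by auto
    then have "x = x0 + (z - y) / m1" using mpos by (auto simp: field_simps)
    then show "halfline_inv f z = halfline_inv f y + 1 / m1 * (z - y)" by (simp add: x_def x0_def)
  next
    fix z assume z: "y \<le> z" "z \<le> y + e / K"
    have z0: "0 \<le> z" using z y by auto
    define x where "x = halfline_inv f z"
    have x: "0 \<le> x" "f x = z" using halfline_inv_solution[OF f z0] by (auto simp: x_def)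
    have "x0 \<le> x" using PL_bounded_le_iff[OF f x0(1) x(1)] x x0 z by auto
    moreover have "x \<le> x0 + e"
    proof (rule ccontr)
      assume c: "\<not> x \<le> x0 + e"
      then have "f (x0 + e) < f x" using PL_bounded_strict_mono[OF f, of "x0 + e" x] x0 e by auto
      also have "f (x0 + e) = y + m2 * e" using r[of "x0 + e"] e x0 by auto
      finally show False using x z em by auto
    qed
    ultimately have "z = y + m2 * (x - x0)" using r[of x] x x0 by auto
    then have "x = x0 + (z - y) / m2" using mpos by (auto simp: field_simps)
    then show "halfline_inv f z = halfline_inv f y + 1 / m2 * (z - y)" by (simp add: x_def x0_def)
  qed
qed

lemma halfline_inv_PL_bounded:
  assumes f: "PL_bounded f K" shows "PL_bounded (halfline_inv f) K"
proof -
  have "halfline_inv f 0 = 0" using halfline_inv_left[OF f, of 0] PL_bounded_0[OF f] by simp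
  then show ?thesis unfolding PL_bounded_def
    using PL_bounded_K[OF f] affine_sides_at_halfline_inv[OF f] by (simp add: halfline_inv_def)
qed

section \<open>Breakpoints: \<open>PLd_set\<close> is the set of \<open>PL_bounded\<close> maps\<close>

lemma affine_has_real_derivative:
  assumes "a < p" "p < b" "\<And>x. a < x \<Longrightarrow> x < b \<Longrightarrow> f x = c + m * x"
  shows "(f has_real_derivative m) (at p)"
proof -
  have "((\<lambda>x. c + m * x) has_real_derivative m) (at p)"
    by (auto intro!: derivative_eq_intros)
  then show ?thesis
    by (rule has_field_derivative_transform_within_open[of _ _ _ "{a<..<b}"]) (use assms in auto)
qed

lemma affine_not_breakpoint:
  assumes "0 < p" "a < p" "p < b" "\<And>x. a < x \<Longrightarrow> x < b \<Longrightarrow> f x = c + m * x"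
  shows "p \<notin> breakpoints f"
proof -
  have "(f has_real_derivative m) (at p within {0..})"
    using affine_has_real_derivative[of a p b f c m] assms by (auto intro: has_field_derivative_at_within)
  then show ?thesis by (auto simp: breakpoints_def real_differentiable_def)
qed

lemma derivative_eq_right_slope:
  assumes "(f has_real_derivative l) (at t within {0..})" "0 \<le> t" "e > 0"
    and "\<And>x. t \<le> x \<Longrightarrow> x \<le> t + e \<Longrightarrow> f x = f t + m * (x - t)"
  shows "l = m"
proof -
  have "((\<lambda>y. (f y - f t) / (y - t)) \<longlongrightarrow> l) (at t within {0..})"
    using assms(1) by (simp add: has_field_derivative_iff)
  then have "((\<lambda>y. (f y - f t) / (y - t)) \<longlongrightarrow> l) (at_right t)"
    by (rule tendsto_within_subset) (use assms(2) in auto)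
  moreover have "eventually (\<lambda>y. (f y - f t) / (y - t) = m) (at_right t)"
  proof (subst eventually_at_right[of t "t + e"])
    show "t < t + e" using assms(3) by simp
    have q: "(f y - f t) / (y - t) = m" if "t < y" "y < t + e" for y
    proof -
      have "f y = f t + m * (y - t)" using that by (intro assms(4)) auto
      then show ?thesis using that by (simp add: field_simps)
    qed
    show "\<exists>b>t. \<forall>y>t. y < b \<longrightarrow> (f y - f t) / (y - t) = m"
      using q assms(3) by (intro exI[of _ "t + e"]) auto
  qed
  ultimately have "((\<lambda>y. m) \<longlongrightarrow> l) (at_right t)" by (rule Lim_transform_eventually)
  then show ?thesis using tendsto_const_iff[of "at_right t" m l] by auto
qed

lemma derivative_eq_left_slope:
  assumes "(f has_real_derivative l) (at t)" "e > 0"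
    and "\<And>x. t - e \<le> x \<Longrightarrow> x \<le> t \<Longrightarrow> f x = f t + m * (x - t)"
  shows "l = m"
proof -
  have "((\<lambda>y. (f y - f t) / (y - t)) \<longlongrightarrow> l) (at t)"
    using assms(1) by (simp add: has_field_derivative_iff)
  then have "((\<lambda>y. (f y - f t) / (y - t)) \<longlongrightarrow> l) (at_left t)"
    by (rule tendsto_within_subset) auto
  moreover have "eventually (\<lambda>y. (f y - f t) / (y - t) = m) (at_left t)"
  proof (subst eventually_at_left[of "t - e" t])
    show "t - e < t" using assms(2) by simp
    have q: "(f y - f t) / (y - t) = m" if "t - e < y" "y < t" for y
    proof -
      have "f y = f t + m * (y - t)" using that by (intro assms(3)) auto
      then show ?thesis using that by (simp add: field_simps)
    qed
    show "\<exists>b<t. \<forall>y>b. y < t \<longrightarrow> (f y - f t) / (y - t) = m"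
      using q assms(2) by (intro exI[of _ "t - e"]) auto
  qed
  ultimately have "((\<lambda>y. m) \<longlongrightarrow> l) (at_left t)" by (rule Lim_transform_eventually)
  then show ?thesis using tendsto_const_iff[of "at_left t" m l] by auto
qed

lemma PL_bounded_breakpoints_isolated:
  assumes f: "PL_bounded f K" and t: "0 \<le> t"
  shows "\<exists>e>0. \<forall>y. 0 \<le> y \<and> y \<noteq> t \<and> \<bar>y - t\<bar> < e \<longrightarrow> y \<notin> breakpoints f"
proof -
  obtain e0 m1 m2 where e0: "e0 > 0" and "1/K \<le> m1" "m1 \<le> K" "1/K \<le> m2" "m2 \<le> K"
      and l: "\<And>x. 0 \<le> x \<Longrightarrow> t - e0 \<le> x \<Longrightarrow> x \<le> t \<Longrightarrow> f x = f t + m1 * (x - t)"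
      and r: "\<And>x. t \<le> x \<Longrightarrow> x \<le> t + e0 \<Longrightarrow> f x = f t + m2 * (x - t)"
    using PL_bounded_affine_sides_at[OF f t] by (erule affine_sides_atE)
  define e where "e = (if t > 0 then min e0 t else e0)"
  have e: "e > 0" "e \<le> e0" "t > 0 \<Longrightarrow> e \<le> t" using e0 t by (auto simp: e_def)
  show ?thesis
  proof (intro exI[of _ e] conjI allI impI e(1))
    fix y assume y: "0 \<le> y \<and> y \<noteq> t \<and> \<bar>y - t\<bar> < e"
    show "y \<notin> breakpoints f"
    proof (cases "y < t")
      case True
      then have "t > 0" using y by auto
      have "y > t - e" using y True by auto
      then have "y > 0" using e(3)[OF \<open>t > 0\<close>] by auto
      show ?thesis
      proof (rule affine_not_breakpoint[of y "t - e" t f "f t - m1 * t" m1])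
        fix x assume "t - e < x" "x < t"
        then have "f x = f t + m1 * (x - t)" using e(2,3) \<open>t > 0\<close> by (intro l) auto
        then show "f x = f t - m1 * t + m1 * x" by (simp add: algebra_simps)
      qed (use \<open>y > 0\<close> \<open>y > t - e\<close> True in auto)
    next
      case False
      then have "y > t" using y by auto
      show ?thesis
      proof (rule affine_not_breakpoint[of y t "t + e" f "f t - m2 * t" m2])
        fix x assume "t < x" "x < t + e"
        then have "f x = f t + m2 * (x - t)" using e(2) by (intro r) auto
        then show "f x = f t - m2 * t + m2 * x" by (simp add: algebra_simps)
      qed (use \<open>y > t\<close> y t in auto)
    qed
  qed
qed

lemma PL_bounded_finite_breakpoints:
  assumes f: "PL_bounded f K" shows "finite (breakpoints f \<inter> {0..M})"
proof -
  have "finite ({0..M} \<inter> breakpoints f)"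
  proof (rule finite_not_islimpt_in_compact)
    show "compact {0..M}" by simp
    fix z assume z: "z \<in> {0..M}"
    obtain e where e: "e > 0" and nb: "\<forall>y. 0 \<le> y \<and> y \<noteq> z \<and> \<bar>y - z\<bar> < e \<longrightarrow> y \<notin> breakpoints f"
      using PL_bounded_breakpoints_isolated[OF f, of z] z by auto
    show "\<not> z islimpt breakpoints f"
    proof
      assume "z islimpt breakpoints f"
      then obtain y where "y \<in> breakpoints f" "y \<noteq> z" "dist y z < e"
        using e by (auto simp: islimpt_approachable)
      moreover have "0 \<le> y" using \<open>y \<in> breakpoints f\<close> by (simp add: breakpoints_def)
      ultimately show False using nb by (auto simp: dist_real_def)
    qed
  qed
  then show ?thesis by (simp add: Int_commute)
qed

lemma PL_bounded_affine_near_regular_point: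
  assumes f: "PL_bounded f K" and s: "0 < s" and nb: "s \<notin> breakpoints f"
  shows "\<exists>e>0. \<exists>m. \<forall>x. \<bar>x - s\<bar> < e \<longrightarrow> f x = f s + m * (x - s)"
proof -
  have "f differentiable at s within {0..}" using nb s by (simp add: breakpoints_def)
  then obtain l where l: "(f has_real_derivative l) (at s within {0..})"
    using real_differentiable_def by blast
  have "(f has_real_derivative l) (at s within {0<..})" using l by (rule DERIV_subset) auto
  then have la: "(f has_real_derivative l) (at s)" using at_within_open[of s "{0<..}"] s by simp
  obtain e0 m1 m2 where e0: "e0 > 0" and "1/K \<le> m1" "m1 \<le> K" "1/K \<le> m2" "m2 \<le> K"
      and lft: "\<And>x. 0 \<le> x \<Longrightarrow> s - e0 \<le> x \<Longrightarrow> x \<le> s \<Longrightarrow> f x = f s + m1 * (x - s)"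
      and rgt: "\<And>x. s \<le> x \<Longrightarrow> x \<le> s + e0 \<Longrightarrow> f x = f s + m2 * (x - s)"
    using PL_bounded_affine_sides_at[OF f less_imp_le[OF s]] by (erule affine_sides_atE)
  define e where "e = min e0 s"
  have e: "e > 0" "e \<le> e0" "e \<le> s" using e0 s by (auto simp: e_def)
  have "l = m2" using derivative_eq_right_slope[OF l _ e0 rgt] s by auto
  moreover have "l = m1"
  proof (rule derivative_eq_left_slope[OF la e(1)])
    fix x assume "s - e \<le> x" "x \<le> s"
    then show "f x = f s + m1 * (x - s)" using e by (intro lft) auto
  qed
  ultimately have m12: "m1 = l" "m2 = l" by auto
  show ?thesis
  proof (rule exI[of _ e], rule conjI[OF e(1)], rule exI[of _ l], intro allI impI)
    fix x assume x: "\<bar>x - s\<bar> < e"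
    show "f x = f s + l * (x - s)"
    proof (cases "x \<le> s")
      case True then show ?thesis using x e m12 by (intro trans[OF lft]) auto
    next
      case False then show ?thesis using x e m12 by (intro trans[OF rgt]) auto
    qed
  qed
qed

lemma affine_if_locally_affine:
  fixes f :: "real \<Rightarrow> real"
  assumes ab: "a < b" and cont: "continuous_on {a..b} f"
    and loc: "\<And>s. a < s \<Longrightarrow> s < b \<Longrightarrow> \<exists>e>0. \<exists>m. \<forall>x. \<bar>x - s\<bar> < e \<longrightarrow> f x = f s + m * (x - s)"
  shows "\<exists>m c. \<forall>x\<in>{a..b}. f x = m * x + c"
proof -
  have der: "DERIV f x :> deriv f x" if x: "a < x" "x < b" for x
  proof -
    obtain e m where e: "e > 0" and fm: "\<forall>y. \<bar>y - x\<bar> < e \<longrightarrow> f y = f x + m * (y - x)"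
      using loc[OF x] by blast
    have "DERIV f x :> m"
      by (rule affine_has_real_derivative[of "x - e" x "x + e" f "f x - m * x" m]) (use e fm in \<open>auto simp: algebra_simps\<close>)
    then show ?thesis using DERIV_imp_deriv by metis
  qed
  have der0: "DERIV (deriv f) x :> 0" if x: "a < x" "x < b" for x
  proof -
    obtain e m where e: "e > 0" and fm: "\<forall>y. \<bar>y - x\<bar> < e \<longrightarrow> f y = f x + m * (y - x)"
      using loc[OF x] by blast
    have dm: "deriv f y = m" if y: "\<bar>y - x\<bar> < e" for y
    proof -
      have "DERIV f y :> m"
        by (rule affine_has_real_derivative[of "x - e" y "x + e" f "f x - m * x" m]) (use e fm y in \<open>auto simp: algebra_simps\<close>)
      then show ?thesis by (rule DERIV_imp_deriv)
    qed
    have "((\<lambda>y. m) has_real_derivative 0) (at x)" by simp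
    then show ?thesis
      by (rule has_field_derivative_transform_within_open[of _ _ _ "{x - e <..< x + e}"])
         (use e dm in auto)
  qed
  define c where "c = (a + b) / 2"
  have c: "a < c" "c < b" using ab by (auto simp: c_def)
  define m0 where "m0 = deriv f c"
  have dc: "deriv f x = m0" if "a < x" "x < b" for x
    unfolding m0_def using DERIV_isconst3[of a b x c "deriv f"] der0 that c by auto
  have cont_diff: "continuous_on {a..b} (\<lambda>x. f x - m0 * x)"
    using cont by (intro continuous_intros)
  have h: "f x - m0 * x = f a - m0 * a" if "a \<le> x" "x \<le> b" for x
  proof (rule DERIV_isconst2[OF ab cont_diff, of x, simplified])
    fix y assume y: "a < y" "y < b"
    have "DERIV f y :> m0" using der[OF y] dc[OF y] by simp
    then have "DERIV (\<lambda>x. f x - m0 * x) y :> m0 - m0 * 1"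
      by (intro derivative_intros) auto
    then show "DERIV (\<lambda>x. f x - m0 * x) y :> 0" by simp
  qed (use that in auto)
  show ?thesis using h by (intro exI[of _ m0] exI[of _ "f a - m0 * a"]) (auto simp: algebra_simps)
qed

lemma PL_bounded_affine_between_breakpoints:
  assumes f: "PL_bounded f K" and a: "0 \<le> a" and ab: "a < b" and nb: "{a<..<b} \<inter> breakpoints f = {}"
  shows "\<exists>m c. \<forall>x\<in>{a..b}. f x = m * x + c"
proof (rule affine_if_locally_affine[OF ab])
  show "continuous_on {a..b} f"
    using PL_bounded_continuous_on[OF f] by (rule continuous_on_subset) (use a in auto)
  fix s assume s: "a < s" "s < b"
  then have "s \<notin> breakpoints f" using nb by auto
  then show "\<exists>e>0. \<exists>m. \<forall>x. \<bar>x - s\<bar> < e \<longrightarrow> f x = f s + m * (x - s)"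
    using PL_bounded_affine_near_regular_point[OF f] a s by simp
qed

lemma PL_bounded_slopes:
  assumes f: "PL_bounded f K" and l: "l \<in> slopes f" shows "1/K \<le> l \<and> l \<le> K"
proof -
  obtain t where t: "0 \<le> t" and d: "(f has_real_derivative l) (at t within {0..})"
    using l by (auto simp: slopes_def)
  obtain e0 m1 m2 where e0: "e0 > 0" and m: "1/K \<le> m1" "m1 \<le> K" "1/K \<le> m2" "m2 \<le> K"
      and lft: "\<And>x. 0 \<le> x \<Longrightarrow> t - e0 \<le> x \<Longrightarrow> x \<le> t \<Longrightarrow> f x = f t + m1 * (x - t)"
      and rgt: "\<And>x. t \<le> x \<Longrightarrow> x \<le> t + e0 \<Longrightarrow> f x = f t + m2 * (x - t)"
    using PL_bounded_affine_sides_at[OF f t] by (erule affine_sides_atE)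
  have "l = m2" using derivative_eq_right_slope[OF d t e0 rgt] .
  then show ?thesis using m by auto
qed

lemma PL_bounded_homeomorphism:
  assumes f: "PL_bounded f K" shows "homeomorphism {0..} {0..} f (halfline_inv f)"
proof -
  have g: "PL_bounded (halfline_inv f) K" using halfline_inv_PL_bounded[OF f] .
  have "f ` {0..} = {0..}"
  proof (intro equalityI subsetI)
    fix y :: real assume "y \<in> {0..}"
    then show "y \<in> f ` {0..}"
      using PL_bounded_nonneg[OF g] halfline_inv_right[OF f] by (metis atLeast_iff imageI)
  qed (use PL_bounded_nonneg[OF f] in auto)
  moreover have "halfline_inv f ` {0..} = {0..}"
  proof (intro equalityI subsetI)
    fix x :: real assume "x \<in> {0..}"
    then show "x \<in> halfline_inv f ` {0..}"
      using PL_bounded_nonneg[OF f] halfline_inv_left[OF f] by (metis atLeast_iff imageI)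
  qed (use PL_bounded_nonneg[OF g] in auto)
  ultimately show ?thesis
    unfolding homeomorphism_def using halfline_inv_left[OF f] halfline_inv_right[OF f]
      PL_bounded_continuous_on[OF f] PL_bounded_continuous_on[OF g] by blast
qed

lemma PL_bounded_bounded_slopes:
  assumes f: "PL_bounded f K" shows "bounded_slopes f"
  unfolding bounded_slopes_def
proof (intro exI[of _ "K + 1"] conjI ballI)
  have K: "K \<ge> 1" using PL_bounded_K[OF f] .
  then show "K + 1 > 1" by simp
  fix l assume "l \<in> slopes f"
  then have l: "1/K \<le> l" "l \<le> K" using PL_bounded_slopes[OF f] by auto
  moreover have "inverse (K + 1) < 1 / K" "0 < 1 / K" using K by (simp_all add: field_simps)
  ultimately have "0 \<le> l" "inverse (K + 1) < l" by linarith+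
  then show "inverse (K + 1) < \<bar>l\<bar>" "\<bar>l\<bar> < K + 1" using l by auto
qed

lemma PL_bounded_in_PLd_set:
  assumes f: "PL_bounded f K" shows "f \<in> PLd_set"
proof -
  have "piecewise_linear f"
    unfolding piecewise_linear_def
    using PL_bounded_finite_breakpoints[OF f] PL_bounded_affine_between_breakpoints[OF f] by blast
  then show ?thesis
    unfolding PLd_set_def
    using PL_bounded_homeomorphism[OF f] PL_bounded_bounded_slopes[OF f] PL_bounded_neg[OF f] by blast
qed

lemma affine_piece_slope_bounds:
  assumes bs: "\<forall>l\<in>slopes f. inverse K0 < \<bar>l\<bar> \<and> \<bar>l\<bar> < K0"
    and sm: "strict_mono_on {0..} f"
    and a: "0 \<le> a" and ab: "a < b"
    and aff: "\<forall>x\<in>{a..b}. f x = m * x + c"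
    and nb: "{a<..<b} \<inter> breakpoints f = {}"
  shows "1/K0 \<le> m \<and> m \<le> K0"
proof -
  define p where "p = (a + b) / 2"
  have p: "a < p" "p < b" "0 < p" using a ab by (auto simp: p_def)
  then have "p \<notin> breakpoints f" using nb by auto
  then have "f differentiable at p within {0..}" using p by (simp add: breakpoints_def)
  then obtain l where l: "(f has_real_derivative l) (at p within {0..})"
    using real_differentiable_def by blast
  have "l \<in> slopes f" unfolding slopes_def using l p \<open>p \<notin> breakpoints f\<close> by auto
  have "l = m"
  proof (rule derivative_eq_right_slope[OF l _ _])
    show "0 \<le> p" using p by simp
    show "0 < b - p" using p by simp
    fix x assume x: "p \<le> x" "x \<le> p + (b - p)"
    have "f x = m * x + c" using aff x p by auto
    moreover have "f p = m * p + c" using aff p by auto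
    ultimately show "f x = f p + m * (x - p)" by (simp add: algebra_simps)
  qed
  have "f a < f b" using sm a ab by (auto intro: strict_mono_onD)
  then have "m * a < m * b" using aff a ab by auto
  then have "m > 0" using ab by (smt (verit) mult_le_cancel_left)
  then show ?thesis using bs \<open>l \<in> slopes f\<close> \<open>l = m\<close> by (auto simp: inverse_eq_divide)
qed

lemma halfline_homeomorphism_strict_mono:
  fixes f :: "real \<Rightarrow> real"
  assumes hom: "homeomorphism {0..} {0..} f g"
  shows "strict_mono_on {0..} f" and "f 0 = 0"
proof -
  have cont: "continuous_on {0..} f" and img: "f ` {0..} = {0..}" and gf: "\<forall>x\<in>{0..}. g (f x) = x"
    using hom by (auto simp: homeomorphism_def)
  have "inj_on f {0..}" using gf by (metis inj_onI)
  then have "strict_mono_on {0..} f \<or> strict_antimono_on {0..} f"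
    using injective_eq_monotone_map[of "{0..}" f] cont is_interval_ci by blast
  moreover obtain x where x: "0 \<le> x" "f x = f 0 + 1" using img by (metis atLeast_iff image_iff imageI order.refl add_increasing2 zero_le_one)
  moreover have "f x \<le> f 0" if "strict_antimono_on {0..} f"
    using monotone_onD[OF that, of 0 x] x(1) by (cases "x = 0") auto
  ultimately show sm: "strict_mono_on {0..} f" by force
  obtain z where z: "0 \<le> z" "f z = 0" using img by (metis atLeast_iff imageE order.refl)
  have "f 0 \<ge> 0" using img by auto
  moreover have "f 0 \<le> f z" using strict_mono_onD[OF sm, of 0 z] z by (cases "z = 0") auto
  ultimately show "f 0 = 0" using z by simp
qed

lemma piecewise_linear_breakpoints_isolated:
  assumes "piecewise_linear f"
  obtains e where "e > 0" "\<And>y. y \<noteq> t \<Longrightarrow> \<bar>y - t\<bar> < e \<Longrightarrow> y \<notin> breakpoints f"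
proof -
  define B where "B = breakpoints f \<inter> {0..t+1} - {t}"
  have "finite B" using assms by (auto simp: B_def piecewise_linear_def)
  then have "open (- B)" by (simp add: finite_imp_closed open_Compl)
  moreover have "t \<in> - B" by (auto simp: B_def)
  ultimately obtain e1 where e1: "e1 > 0" "ball t e1 \<subseteq> - B" by (meson open_contains_ball)
  show ?thesis
  proof (rule that[of "min e1 1"])
    fix y assume "y \<noteq> t" "\<bar>y - t\<bar> < min e1 1"
    then show "y \<notin> breakpoints f"
      using e1 by (auto simp: B_def breakpoints_def dist_real_def subset_eq)
  qed (use e1 in auto)
qed

lemma affine_sides_at_if_piecewise_linear:
  assumes pl: "piecewise_linear f"
    and bs: "\<forall>l\<in>slopes f. inverse K < \<bar>l\<bar> \<and> \<bar>l\<bar> < K" and K: "K > 1"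
    and sm: "strict_mono_on {0..} f" and t: "0 \<le> t"
  shows "affine_sides_at f t K"
proof -
  have aff: "\<And>a b. 0 \<le> a \<Longrightarrow> a < b \<Longrightarrow> {a<..<b} \<inter> breakpoints f = {} \<Longrightarrow>
      \<exists>m c. \<forall>x \<in> {a..b}. f x = m * x + c"
    using pl by (auto simp: piecewise_linear_def)
  obtain e where e: "e > 0" and nbk: "\<And>y. y \<noteq> t \<Longrightarrow> \<bar>y - t\<bar> < e \<Longrightarrow> y \<notin> breakpoints f"
    using piecewise_linear_breakpoints_isolated[OF pl] by blast
  have nbr: "{t<..<t+e} \<inter> breakpoints f = {}" using nbk by auto
  obtain m2 c2 where a2: "\<forall>x\<in>{t..t+e}. f x = m2 * x + c2" using aff[OF t _ nbr] e by auto
  have s2: "1/K \<le> m2" "m2 \<le> K" using affine_piece_slope_bounds[OF bs sm t _ a2 nbr] e by simp_all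
  show ?thesis
  proof (cases "t = 0")
    case True
    have "1/K \<le> 1" "1 \<le> K" using K by auto
    with s2 e a2 show ?thesis
      by (intro affine_sides_at_pieces[of e K 1 m2 t f "f 0" c2]) (auto simp: True)
  next
    case False
    define a where "a = max 0 (t - e)"
    have a: "0 \<le> a" "a < t" "t - e \<le> a" using False t e by (auto simp: a_def)
    have nbl: "{a<..<t} \<inter> breakpoints f = {}" using nbk a by auto
    obtain m1 c1 where a1: "\<forall>x\<in>{a..t}. f x = m1 * x + c1" using aff[OF a(1) a(2) nbl] by auto
    have s1: "1/K \<le> m1" "m1 \<le> K" using affine_piece_slope_bounds[OF bs sm a(1) a(2) a1 nbl] by simp_all
    show ?thesis
      by (rule affine_sides_at_pieces[of e K m1 m2 t f c1 c2]) (use s1 s2 e a a1 a2 in \<open>auto simp: a_def\<close>)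
  qed
qed

lemma PLd_set_imp_PL_bounded:
  assumes "f \<in> PLd_set" obtains K where "PL_bounded f K"
proof -
  obtain g where hom: "homeomorphism {0..} {0..} f g"
    and pl: "piecewise_linear f" and bsl: "bounded_slopes f" and neg: "\<forall>x<0. f x = x"
    using assms by (auto simp: PLd_set_def)
  obtain K where K: "K > 1" and bs: "\<forall>l\<in>slopes f. inverse K < \<bar>l\<bar> \<and> \<bar>l\<bar> < K"
    using bsl by (auto simp: bounded_slopes_def)
  have "PL_bounded f K"
    unfolding PL_bounded_def
    using K neg halfline_homeomorphism_strict_mono[OF hom]
      affine_sides_at_if_piecewise_linear[OF pl bs K] by auto
  then show ?thesis by (rule that)
qed

lemma PLd_set_iff: "f \<in> PLd_set \<longleftrightarrow> (\<exists>K. PL_bounded f K)"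
  using PLd_set_imp_PL_bounded PL_bounded_in_PLd_set by metis

section \<open>The group \<open>PLd\<close> and its normal subgroup \<open>H_asym\<close>\<close>

lemma PL_bounded_id: "PL_bounded id 1"
  unfolding PL_bounded_def by (auto intro: affine_sides_atI[of 1 1 1 1])

lemma PL_bounded_filterlim_at_top:
  assumes f: "PL_bounded f K" shows "filterlim f at_top at_top"
proof (rule filterlim_at_top_mono)
  have "0 < 1 / K" using PL_bounded_K[OF f] by simp
  then show "LIM x at_top. 1 / K * x :> at_top"
    by (rule filterlim_tendsto_pos_mult_at_top[OF tendsto_const _ filterlim_ident])
  show "\<forall>\<^sub>F x in at_top. 1 / K * x \<le> f x"
    using eventually_ge_at_top[of "0::real"] by eventually_elim (use PL_bounded_lower[OF f] in simp)
qed

lemma PL_bounded_ratio_tendsto: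
  assumes g: "PL_bounded g K" and uv: "((\<lambda>y. u y / v y) \<longlongrightarrow> 1) F"
    and vp: "eventually (\<lambda>y. 0 < v y) F" and un: "eventually (\<lambda>y. 0 \<le> u y) F"
  shows "((\<lambda>y. g (u y) / g (v y)) \<longlongrightarrow> 1) F"
proof -
  have K: "K \<ge> 1" using PL_bounded_K[OF g] .
  have "((\<lambda>y. g (u y) / g (v y) - 1) \<longlongrightarrow> 0) F"
  proof (rule Lim_null_comparison)
    show "eventually (\<lambda>y. norm (g (u y) / g (v y) - 1) \<le> K * K * \<bar>u y / v y - 1\<bar>) F"
      using vp un
    proof eventually_elim
      case (elim y)
      have gv: "v y / K \<le> g (v y)" using PL_bounded_lower[OF g] elim by auto
      have gvp: "0 < g (v y)" using PL_bounded_pos[OF g] elim by auto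
      have lip: "\<bar>g (u y) - g (v y)\<bar> \<le> K * \<bar>u y - v y\<bar>" using PL_bounded_lipschitz[OF g] elim by auto
      have "norm (g (u y) / g (v y) - 1) = \<bar>g (u y) - g (v y)\<bar> / g (v y)"
        using gvp by (simp add: field_simps abs_div)
      also have "\<dots> \<le> K * \<bar>u y - v y\<bar> / g (v y)"
        using lip gvp by (intro divide_right_mono) auto
      also have "\<dots> \<le> K * \<bar>u y - v y\<bar> / (v y / K)"
      proof (rule divide_left_mono[OF gv])
        show "0 \<le> K * \<bar>u y - v y\<bar>" using K by simp
        have "0 < v y / K" using elim K by simp
        then show "0 < g (v y) * (v y / K)" using gvp by (rule mult_pos_pos[rotated])
      qed
      also have "\<dots> = K * K * \<bar>u y / v y - 1\<bar>"
        using elim K by (simp add: field_simps abs_div abs_mult)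
      finally show ?case .
    qed
    have "((\<lambda>y. u y / v y - 1) \<longlongrightarrow> 0) F" using uv by (simp add: Lim_null[symmetric])
    then have "((\<lambda>y. \<bar>u y / v y - 1\<bar>) \<longlongrightarrow> 0) F" using tendsto_rabs_zero by blast
    then show "((\<lambda>y. K * K * \<bar>u y / v y - 1\<bar>) \<longlongrightarrow> 0) F"
      using tendsto_mult_right_zero by blast
  qed
  then show ?thesis by (simp add: Lim_null[symmetric])
qed

lemma H_asym_ratio: "h \<in> H_asym \<Longrightarrow> ((\<lambda>x. h x / x) \<longlongrightarrow> 1) at_top"
  by (simp add: H_asym_def)

lemma H_asym_ratio_comp:
  assumes "h \<in> H_asym" and "filterlim w at_top F"
  shows "((\<lambda>x. h (w x) / w x) \<longlongrightarrow> 1) F"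
  using filterlim_compose[OF H_asym_ratio[OF assms(1)] assms(2)] by simp

lemma H_asym_subset: "H_asym \<subseteq> PLd_set"
  by (auto simp: H_asym_def)

lemma id_in_H_asym: "id \<in> H_asym"
proof -
  have "((\<lambda>x::real. x / x) \<longlongrightarrow> 1) at_top"
    by (rule Lim_transform_eventually[OF tendsto_const])
       (use eventually_gt_at_top[of "0::real"] in \<open>rule eventually_mono, simp\<close>)
  then show ?thesis using PL_bounded_in_PLd_set[OF PL_bounded_id] by (simp add: H_asym_def)
qed

lemma PLd_set_comp: "f \<in> PLd_set \<Longrightarrow> g \<in> PLd_set \<Longrightarrow> f \<circ> g \<in> PLd_set"
  using PL_bounded_comp by (metis PLd_set_iff)

lemma PLd_set_halfline_inv: "f \<in> PLd_set \<Longrightarrow> halfline_inv f \<in> PLd_set"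
  using halfline_inv_PL_bounded by (metis PLd_set_iff)

lemma H_asym_comp:
  assumes f: "f \<in> H_asym" and g: "g \<in> H_asym" shows "f \<circ> g \<in> H_asym"
proof -
  obtain K where gK: "PL_bounded g K" using g H_asym_subset PLd_set_imp_PL_bounded by blast
  have "((\<lambda>x. f (g x) / g x * (g x / x)) \<longlongrightarrow> 1) at_top"
    using tendsto_mult[OF H_asym_ratio_comp[OF f PL_bounded_filterlim_at_top[OF gK]] H_asym_ratio[OF g]]
    by simp
  moreover have "\<forall>\<^sub>F x in at_top. f (g x) / g x * (g x / x) = (f \<circ> g) x / x"
    using eventually_gt_at_top[of "0::real"]
  proof eventually_elim
    case (elim x)
    then have "g x \<noteq> 0" using PL_bounded_pos[OF gK, of x] by simp
    then show ?case by simp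
  qed
  ultimately have "((\<lambda>x. (f \<circ> g) x / x) \<longlongrightarrow> 1) at_top"
    by (rule Lim_transform_eventually)
  then show ?thesis using PLd_set_comp f g H_asym_subset by (auto simp: H_asym_def)
qed

lemma H_asym_halfline_inv:
  assumes f: "f \<in> H_asym" shows "halfline_inv f \<in> H_asym"
proof -
  obtain K where fK: "PL_bounded f K" using f H_asym_subset PLd_set_imp_PL_bounded by blast
  have w: "filterlim (halfline_inv f) at_top at_top"
    using PL_bounded_filterlim_at_top[OF halfline_inv_PL_bounded[OF fK]] .
  have "((\<lambda>x. inverse (f x / x)) \<longlongrightarrow> inverse 1) at_top"
    by (intro tendsto_inverse H_asym_ratio[OF f]) simp
  then have "((\<lambda>y. inverse (f (halfline_inv f y) / halfline_inv f y)) \<longlongrightarrow> 1) at_top"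
    using filterlim_compose[OF _ w] by simp
  then have "((\<lambda>y. halfline_inv f y / y) \<longlongrightarrow> 1) at_top"
    using halfline_inv_right[OF fK] by simp
  then show ?thesis using PLd_set_halfline_inv f H_asym_subset by (auto simp: H_asym_def)
qed

lemma H_asym_conj:
  assumes g: "g \<in> PLd_set" and h: "h \<in> H_asym" shows "g \<circ> h \<circ> halfline_inv g \<in> H_asym"
proof -
  obtain K where gK: "PL_bounded g K" using g PLd_set_imp_PL_bounded by blast
  obtain Kh where hK: "PL_bounded h Kh" using h H_asym_subset PLd_set_imp_PL_bounded by blast
  note gi = halfline_inv_PL_bounded[OF gK]
  have "((\<lambda>y. g (h (halfline_inv g y)) / g (halfline_inv g y)) \<longlongrightarrow> 1) at_top"
  proof (rule PL_bounded_ratio_tendsto[OF gK])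
    show "((\<lambda>y. h (halfline_inv g y) / halfline_inv g y) \<longlongrightarrow> 1) at_top"
      using H_asym_ratio_comp[OF h PL_bounded_filterlim_at_top[OF gi]] .
    show "\<forall>\<^sub>F y in at_top. 0 < halfline_inv g y"
      using eventually_gt_at_top[of "0::real"] by eventually_elim (rule PL_bounded_pos[OF gi])
    show "\<forall>\<^sub>F y in at_top. 0 \<le> h (halfline_inv g y)"
      using eventually_ge_at_top[of "0::real"]
      by eventually_elim (intro PL_bounded_nonneg[OF hK] PL_bounded_nonneg[OF gi])
  qed
  then have "((\<lambda>y. (g \<circ> h \<circ> halfline_inv g) y / y) \<longlongrightarrow> 1) at_top"
    using halfline_inv_right[OF gK] by simp
  moreover have "g \<circ> h \<circ> halfline_inv g \<in> PLd_set"
    using g h H_asym_subset by (intro PLd_set_comp PLd_set_halfline_inv) auto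
  ultimately show ?thesis by (simp add: H_asym_def)
qed

lemma group_PLd: "group PLd"
proof (rule groupI)
  fix f assume "f \<in> carrier PLd"
  then obtain K where "PL_bounded f K" by (auto simp: PLd_def elim: PLd_set_imp_PL_bounded)
  then have "halfline_inv f \<circ> f = id" by (auto simp: halfline_inv_left)
  then show "\<exists>g\<in>carrier PLd. g \<otimes>\<^bsub>PLd\<^esub> f = \<one>\<^bsub>PLd\<^esub>"
    using PLd_set_halfline_inv \<open>f \<in> carrier PLd\<close> by (auto simp: PLd_def)
qed (auto simp: PLd_def PLd_set_comp PL_bounded_in_PLd_set[OF PL_bounded_id] comp_assoc)

lemma inv_PLd:
  assumes "f \<in> PLd_set" shows "inv\<^bsub>PLd\<^esub> f = halfline_inv f"
proof -
  obtain K where "PL_bounded f K" using assms by (rule PLd_set_imp_PL_bounded)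
  then have "halfline_inv f \<otimes>\<^bsub>PLd\<^esub> f = \<one>\<^bsub>PLd\<^esub>" by (auto simp: PLd_def halfline_inv_left)
  then show ?thesis
    using group.inv_equality[OF group_PLd] assms PLd_set_halfline_inv by (auto simp: PLd_def)
qed

lemma normal_H_asym: "H_asym \<lhd> PLd"
proof -
  interpret group PLd by (rule group_PLd)
  have "subgroup H_asym PLd"
    by (rule subgroupI)
       (use H_asym_subset id_in_H_asym H_asym_comp H_asym_halfline_inv inv_PLd in \<open>auto simp: PLd_def\<close>)
  then show ?thesis
    unfolding normal_inv_iff using H_asym_conj inv_PLd by (auto simp: PLd_def)
qed

section \<open>Bumps\<close>

lemma eventually_less_within_nhds:
  fixes f g :: "real \<Rightarrow> real"
  assumes "continuous (at t within S) f" "continuous (at t within S) g" "g t < f t"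
  shows "\<forall>\<^sub>F x in nhds t. x \<in> S \<longrightarrow> g x < f x"
proof -
  have "((\<lambda>x. f x - g x) \<longlongrightarrow> f t - g t) (at t within S)"
    using assms(1,2) unfolding continuous_within by (rule tendsto_diff)
  then have "\<forall>\<^sub>F x in at t within S. 0 < f x - g x"
    using assms(3) by (intro order_tendstoD(1)) auto
  then show ?thesis
    unfolding eventually_at_filter by (rule eventually_mono) (use assms(3) in auto)
qed

lemma affine_sides_at_cong:
  assumes f: "affine_sides_at f t K" and t: "0 \<le> t"
    and ev: "\<forall>\<^sub>F x in nhds t. 0 \<le> x \<longrightarrow> g x = f x"
  shows "affine_sides_at g t K"
proof -
  obtain d where d: "d > 0" and dd: "\<And>x. dist x t < d \<Longrightarrow> 0 \<le> x \<Longrightarrow> g x = f x"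
    using ev unfolding eventually_nhds_metric by blast
  obtain e m1 m2 where e: "e > 0" and m: "1/K \<le> m1" "m1 \<le> K" "1/K \<le> m2" "m2 \<le> K"
      and l: "\<And>x. 0 \<le> x \<Longrightarrow> t - e \<le> x \<Longrightarrow> x \<le> t \<Longrightarrow> f x = f t + m1 * (x - t)"
      and r: "\<And>x. t \<le> x \<Longrightarrow> x \<le> t + e \<Longrightarrow> f x = f t + m2 * (x - t)"
    using f by (erule affine_sides_atE)
  define e' where "e' = min e (d / 2)"
  have e': "e' > 0" "e' \<le> e" "e' < d" using e d by (auto simp: e'_def)
  have gt: "g t = f t" using dd[of t] d t by simp
  show ?thesis
  proof (rule affine_sides_atI[OF e'(1) m])
    fix x assume x: "0 \<le> x" "t - e' \<le> x" "x \<le> t"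
    have "g x = f x" using x e' by (intro dd) (auto simp: dist_real_def)
    also have "f x = f t + m1 * (x - t)" using x e' by (intro l) auto
    finally show "g x = g t + m1 * (x - t)" using gt by simp
  next
    fix x assume x: "t \<le> x" "x \<le> t + e'"
    have "g x = f x" using x e' t by (intro dd) (auto simp: dist_real_def)
    also have "f x = f t + m2 * (x - t)" using x e' by (intro r) auto
    finally show "g x = g t + m2 * (x - t)" using gt by simp
  qed
qed

lemma affine_sides_at_linear:
  assumes "1/K \<le> m" "m \<le> K" shows "affine_sides_at (\<lambda>x. m * x + c) t K"
  by (rule affine_sides_at_pieces[of 1]) (use assms in auto)

lemma affine_sides_at_max:
  assumes f: "affine_sides_at f t K" and g: "affine_sides_at g t K" and t: "0 \<le> t"
  shows "affine_sides_at (\<lambda>x. max (f x) (g x)) t K"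
proof -
  note cont = affine_sides_at_continuous[OF f] affine_sides_at_continuous[OF g]
  consider "g t < f t" | "f t < g t" | "f t = g t" by linarith
  then show ?thesis
  proof cases
    case 1
    then have "\<forall>\<^sub>F x in nhds t. 0 \<le> x \<longrightarrow> max (f x) (g x) = f x"
      using eventually_less_within_nhds[OF cont] by (auto elim: eventually_mono)
    then show ?thesis by (rule affine_sides_at_cong[OF f t])
  next
    case 2
    then have "\<forall>\<^sub>F x in nhds t. 0 \<le> x \<longrightarrow> max (f x) (g x) = g x"
      using eventually_less_within_nhds[OF cont(2,1)] by (auto elim: eventually_mono)
    then show ?thesis by (rule affine_sides_at_cong[OF g t])
  next
    case 3
    obtain e m1 m2 where e: "e > 0" and m: "1/K \<le> m1" "m1 \<le> K" "1/K \<le> m2" "m2 \<le> K"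
      and lf: "\<And>x. 0 \<le> x \<Longrightarrow> t - e \<le> x \<Longrightarrow> x \<le> t \<Longrightarrow> f x = f t + m1 * (x - t)"
      and rf: "\<And>x. t \<le> x \<Longrightarrow> x \<le> t + e \<Longrightarrow> f x = f t + m2 * (x - t)"
      using f by (erule affine_sides_atE)
    obtain e' n1 n2 where e': "e' > 0" and n: "1/K \<le> n1" "n1 \<le> K" "1/K \<le> n2" "n2 \<le> K"
      and lg: "\<And>x. 0 \<le> x \<Longrightarrow> t - e' \<le> x \<Longrightarrow> x \<le> t \<Longrightarrow> g x = g t + n1 * (x - t)"
      and rg: "\<And>x. t \<le> x \<Longrightarrow> x \<le> t + e' \<Longrightarrow> g x = g t + n2 * (x - t)"
      using g by (erule affine_sides_atE)
    show ?thesis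
    proof (rule affine_sides_atI[of "min e e'" K "min m1 n1" "max m2 n2"])
      fix x assume x: "0 \<le> x" "t - min e e' \<le> x" "x \<le> t"
      have "max (m1 * (x - t)) (n1 * (x - t)) = min m1 n1 * (x - t)"
        using x(3) by (smt (verit) mult_right_mono_neg)
      then show "max (f x) (g x) = max (f t) (g t) + min m1 n1 * (x - t)"
        using lf[of x] lg[of x] x 3 by simp
    next
      fix x assume x: "t \<le> x" "x \<le> t + min e e'"
      have "max (m2 * (x - t)) (n2 * (x - t)) = max m2 n2 * (x - t)"
        using x(1) by (smt (verit) mult_right_mono)
      then show "max (f x) (g x) = max (f t) (g t) + max m2 n2 * (x - t)"
        using rf[of x] rg[of x] x 3 by simp
    qed (use e e' m n in auto)
  qed
qed

lemma affine_sides_at_min: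
  assumes f: "affine_sides_at f t K" and g: "affine_sides_at g t K" and t: "0 \<le> t"
  shows "affine_sides_at (\<lambda>x. min (f x) (g x)) t K"
proof -
  note cont = affine_sides_at_continuous[OF f] affine_sides_at_continuous[OF g]
  consider "g t < f t" | "f t < g t" | "f t = g t" by linarith
  then show ?thesis
  proof cases
    case 1
    then have "\<forall>\<^sub>F x in nhds t. 0 \<le> x \<longrightarrow> min (f x) (g x) = g x"
      using eventually_less_within_nhds[OF cont] by (auto elim: eventually_mono)
    then show ?thesis by (rule affine_sides_at_cong[OF g t])
  next
    case 2
    then have "\<forall>\<^sub>F x in nhds t. 0 \<le> x \<longrightarrow> min (f x) (g x) = f x"
      using eventually_less_within_nhds[OF cont(2,1)] by (auto elim: eventually_mono)
    then show ?thesis by (rule affine_sides_at_cong[OF f t])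
  next
    case 3
    obtain e m1 m2 where e: "e > 0" and m: "1/K \<le> m1" "m1 \<le> K" "1/K \<le> m2" "m2 \<le> K"
      and lf: "\<And>x. 0 \<le> x \<Longrightarrow> t - e \<le> x \<Longrightarrow> x \<le> t \<Longrightarrow> f x = f t + m1 * (x - t)"
      and rf: "\<And>x. t \<le> x \<Longrightarrow> x \<le> t + e \<Longrightarrow> f x = f t + m2 * (x - t)"
      using f by (erule affine_sides_atE)
    obtain e' n1 n2 where e': "e' > 0" and n: "1/K \<le> n1" "n1 \<le> K" "1/K \<le> n2" "n2 \<le> K"
      and lg: "\<And>x. 0 \<le> x \<Longrightarrow> t - e' \<le> x \<Longrightarrow> x \<le> t \<Longrightarrow> g x = g t + n1 * (x - t)"
      and rg: "\<And>x. t \<le> x \<Longrightarrow> x \<le> t + e' \<Longrightarrow> g x = g t + n2 * (x - t)"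
      using g by (erule affine_sides_atE)
    show ?thesis
    proof (rule affine_sides_atI[of "min e e'" K "max m1 n1" "min m2 n2"])
      fix x assume x: "0 \<le> x" "t - min e e' \<le> x" "x \<le> t"
      have "min (m1 * (x - t)) (n1 * (x - t)) = max m1 n1 * (x - t)"
        using x(3) by (smt (verit) mult_right_mono_neg)
      then show "min (f x) (g x) = min (f t) (g t) + max m1 n1 * (x - t)"
        using lf[of x] lg[of x] x 3 by simp
    next
      fix x assume x: "t \<le> x" "x \<le> t + min e e'"
      have "min (m2 * (x - t)) (n2 * (x - t)) = min m2 n2 * (x - t)"
        using x(1) by (smt (verit) mult_right_mono)
      then show "min (f x) (g x) = min (f t) (g t) + min m2 n2 * (x - t)"
        using rf[of x] rg[of x] x 3 by simp
    qed (use e e' m n in auto)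
  qed
qed

text \<open>The identity outside \<open>[s, 2 L s]\<close>, with slope \<open>2\<close> on \<open>[s, L s]\<close> and slope \<open>1 / L\<close>
  on \<open>[L s, 2 L s]\<close>.\<close>
definition bump :: "real \<Rightarrow> real \<Rightarrow> real \<Rightarrow> real" where
  "bump L s x = max x (min (2 * x - s) (x / L + (2 * L - 2) * s))"

lemma bump_affine_sides_at:
  assumes L: "2 \<le> L" and t: "0 \<le> t" shows "affine_sides_at (bump L s) t L"
proof -
  have "1 / L \<le> 1" using L by simp
  then have "1 / L \<le> 1" "1 / L \<le> 2" "1 / L \<le> L" "1 / L \<le> 1 / L" using L by linarith+
  with L have "affine_sides_at (\<lambda>x. max (1 * x + 0) (min (2 * x + - s) ((1 / L) * x + (2 * L - 2) * s))) t L"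
    by (intro affine_sides_at_max affine_sides_at_min affine_sides_at_linear t) auto
  then show ?thesis by (simp add: bump_def [abs_def])
qed

lemma bump_eq_id:
  assumes L: "1 < L" and x: "x \<le> s \<or> 2 * L * s \<le> x" shows "bump L s x = x"
proof -
  have "x / L + (2 * L - 2) * s \<le> x" if "2 * L * s \<le> x"
  proof -
    have "(1 - 1 / L) * (2 * L * s) \<le> (1 - 1 / L) * x" using L that by (intro mult_left_mono) auto
    moreover have "(1 - 1 / L) * (2 * L * s) = (2 * L - 2) * s" "x / L + (1 - 1 / L) * x = x"
      using L by (simp_all add: field_simps)
    ultimately show ?thesis by linarith
  qed
  then show ?thesis using x by (auto simp: bump_def)
qed

lemma bump_eq_double:
  assumes L: "1 < L" and x: "s \<le> x" "x \<le> L * s" shows "bump L s x = 2 * x - s"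
proof -
  have "1 / L < 1" using L by simp
  then have "(2 - 1 / L) * x \<le> (2 - 1 / L) * (L * s)" using x by (intro mult_left_mono) auto
  moreover have "(2 - 1 / L) * (L * s) = (2 * L - 1) * s" "(2 - 1 / L) * x = 2 * x - x / L"
    using L by (simp_all add: field_simps)
  ultimately have "2 * x - s \<le> x / L + (2 * L - 2) * s" by (simp add: algebra_simps)
  then show ?thesis using x by (simp add: bump_def)
qed

definition glue :: "(nat \<Rightarrow> 'a set) \<Rightarrow> (nat \<Rightarrow> 'a \<Rightarrow> 'a) \<Rightarrow> 'a \<Rightarrow> 'a" where
  "glue B \<phi> x = (if \<exists>n. x \<in> B n then \<phi> (THE n. x \<in> B n) x else x)"

lemma glue_eq:
  assumes "\<And>y. y \<notin> B n \<Longrightarrow> \<phi> n y = y" and "\<And>m. m \<noteq> n \<Longrightarrow> x \<notin> B m"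
  shows "glue B \<phi> x = \<phi> n x"
proof (cases "x \<in> B n")
  case True
  then have "(THE n. x \<in> B n) = n" using assms(2) by blast
  then show ?thesis using True by (auto simp: glue_def)
next
  case False
  then have "\<not> (\<exists>m. x \<in> B m)" using assms(2) by metis
  then show ?thesis by (simp add: glue_def assms(1)[OF False])
qed

lemma eventually_avoids_all_but_one:
  fixes B :: "nat \<Rightarrow> real set"
  assumes closed: "\<And>n. closed (B n)" and bound: "\<And>n. B n \<subseteq> {real n..}" and disj: "disjoint_family B"
  obtains n where "\<forall>\<^sub>F x in nhds t. \<forall>m. m \<noteq> n \<longrightarrow> x \<notin> B m"
proof -
  have "\<exists>n. \<forall>m. t \<in> B m \<longrightarrow> m = n"
  proof (cases "\<exists>m. t \<in> B m")
    case True
    then obtain n where "t \<in> B n" by blast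
    then show ?thesis using disj by (auto simp: disjoint_family_on_def)
  qed auto
  then obtain n where n: "\<And>m. t \<in> B m \<Longrightarrow> m = n" by blast
  define N where "N = nat \<lceil>t + 1\<rceil>"
  have N: "t + 1 \<le> real N" unfolding N_def by linarith
  \<comment> \<open>Only the finitely many sets \<open>B m\<close> with \<open>m < N\<close> meet \<open>(-\<infinity>, t + 1)\<close>.\<close>
  have "\<forall>\<^sub>F x in nhds t. x < t + 1"
    using eventually_nhds_in_open[of "{..<t+1}" t] by simp
  moreover have "\<forall>\<^sub>F x in nhds t. \<forall>m\<in>{..<N}. m \<noteq> n \<longrightarrow> x \<notin> B m"
  proof (rule eventually_ball_finite[OF finite_lessThan], intro ballI)
    fix m
    have "m \<noteq> n \<Longrightarrow> \<forall>\<^sub>F x in nhds t. x \<in> - B m"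
      using n closed by (intro eventually_nhds_in_open) auto
    then show "\<forall>\<^sub>F x in nhds t. m \<noteq> n \<longrightarrow> x \<notin> B m"
      by (cases "m = n") (auto elim: eventually_mono)
  qed
  ultimately have "\<forall>\<^sub>F x in nhds t. \<forall>m. m \<noteq> n \<longrightarrow> x \<notin> B m"
  proof eventually_elim
    case (elim x)
    have "x \<notin> B m" if "N \<le> m" for m
      using bound[of m] elim(1) that N by (auto simp: subset_eq)
    then show ?case using elim(2) by (meson lessThan_iff not_less)
  qed
  then show ?thesis by (rule that)
qed

lemma frequently_at_top_sequence:
  fixes P :: "real \<Rightarrow> bool"
  assumes "\<exists>\<^sub>F x in at_top. P x"
  obtains s where "\<And>n. real n < s n" "\<And>n. P (s n)" "\<And>n. r * s n < s (Suc n)"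
proof -
  have P: "\<exists>x>M. P x" for M
    using assms by (simp add: frequently_def eventually_at_top_dense)
  have "\<exists>s. \<forall>n. (real n < s n \<and> P (s n)) \<and> r * s n < s (Suc n)"
  proof (rule dependent_nat_choice)
    show "\<exists>x. real 0 < x \<and> P x" using P[of 0] by auto
    fix x n
    obtain y where "max (real (Suc n)) (r * x) < y" "P y" using P by blast
    then show "\<exists>y. (real (Suc n) < y \<and> P y) \<and> r * x < y" by auto
  qed
  then show ?thesis using that by blast
qed

lemma PL_bounded_bumps:
  assumes L: "2 \<le> L" and s: "\<And>n. real n < s n" and sep: "\<And>n. 2 * L * s n < s (Suc n)"
  obtains g where "PL_bounded g L" "\<And>n x. s n \<le> x \<Longrightarrow> x \<le> L * s n \<Longrightarrow> g x = 2 * x - s n"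
proof -
  define B where "B n = {s n .. 2 * L * s n}" for n
  define g where "g = glue B (\<lambda>n. bump L (s n))"
  have spos: "0 < s n" for n using s[of n] of_nat_0_le_iff[of n] by linarith
  have far: "2 * L * s m < s n" if "m < n" for m n
    using that
  proof (induction n)
    case (Suc n)
    have "s n \<le> 2 * L * s n" using spos[of n] L by (simp add: mult_le_cancel_right1)
    then show ?case using Suc sep[of n] by (cases "m = n") auto
  qed simp
  have disj: "disjoint_family B"
    unfolding disjoint_family_on_def
  proof (intro ballI impI)
    fix m n :: nat assume "m \<noteq> n"
    then consider "m < n" | "n < m" by linarith
    then show "B m \<inter> B n = {}" by cases (auto simp: B_def dest!: far)
  qed
  have bump_id: "bump L (s n) y = y" if "y \<notin> B n" for n y
    using L that by (intro bump_eq_id) (auto simp: B_def)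
  have g_local: "g x = bump L (s n) x" if "\<And>m. m \<noteq> n \<Longrightarrow> x \<notin> B m" for x n
    unfolding g_def using bump_id that by (rule glue_eq)
  have sides: "affine_sides_at g t L" if t: "0 \<le> t" for t
  proof -
    have "B n \<subseteq> {real n..}" for n using s[of n] by (auto simp: B_def)
    then obtain n where "\<forall>\<^sub>F x in nhds t. \<forall>m. m \<noteq> n \<longrightarrow> x \<notin> B m"
      using eventually_avoids_all_but_one[of B t] disj by (auto simp: B_def)
    then have "\<forall>\<^sub>F x in nhds t. 0 \<le> x \<longrightarrow> g x = bump L (s n) x"
      by (rule eventually_mono) (auto intro: g_local)
    then show ?thesis by (rule affine_sides_at_cong[OF bump_affine_sides_at[OF L t] t])
  qed
  have "g x = x" if "x \<le> 0" for x
    using spos that by (auto simp: g_def glue_def B_def) (meson not_le order_trans)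
  then have "PL_bounded g L" unfolding PL_bounded_def using L sides by auto
  moreover have "g x = 2 * x - s n" if x: "s n \<le> x" "x \<le> L * s n" for n x
  proof -
    have "x \<in> B n" using x L spos[of n] by (auto simp: B_def)
    then have "g x = bump L (s n) x" using disj by (intro g_local) (auto simp: disjoint_family_on_def)
    then show ?thesis using bump_eq_double[of L "s n" x] L x by simp
  qed
  ultimately show ?thesis by (rule that)
qed

section \<open>The centre of \<open>PLd Mod H_asym\<close>\<close>

lemma expanding_not_commuting:
  assumes f: "PL_bounded f K" and \<delta>: "0 < \<delta>" and expanding: "\<exists>\<^sub>F x in at_top. (1 + \<delta>) * x \<le> f x"
  obtains g where "g \<in> PLd_set" "\<And>h. h \<in> H_asym \<Longrightarrow> g \<circ> f \<noteq> h \<circ> f \<circ> g"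
proof -
  define L where "L = K + 1"
  have L: "2 \<le> L" using PL_bounded_K[OF f] by (simp add: L_def)
  obtain s where s: "\<And>n. real n < s n" and sf: "\<And>n. (1 + \<delta>) * s n \<le> f (s n)"
    and sep: "\<And>n. 2 * L * s n < s (Suc n)"
    using frequently_at_top_sequence[OF expanding] by blast
  obtain g where g: "PL_bounded g L" and g_double: "\<And>n x. s n \<le> x \<Longrightarrow> x \<le> L * s n \<Longrightarrow> g x = 2 * x - s n"
    using PL_bounded_bumps[OF L s sep] by blast
  have spos: "0 < s n" for n using s[of n] of_nat_0_le_iff[of n] by linarith
  have fs: "s n \<le> f (s n)" "f (s n) \<le> L * s n" for n
    using sf[of n] spos[of n] mult_pos_pos[OF \<delta> spos[of n]] PL_bounded_upper[OF f, of "s n"]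
    by (auto simp: L_def algebra_simps)
  have "s n \<le> L * s n" for n using spos[of n] L by simp
  then have g_at: "g (s n) = s n" "g (f (s n)) = 2 * f (s n) - s n" for n
    using g_double[OF order.refl] g_double[OF fs] by simp_all
  have ratio: "1 + \<delta> / (1 + \<delta>) \<le> (2 * f (s n) - s n) / f (s n)" for n
    using sf[of n] PL_bounded_pos[OF f spos[of n]] \<delta> spos[of n] by (simp add: field_simps)
  have f_s_top: "filterlim (\<lambda>n. f (s n)) at_top sequentially"
  proof (rule filterlim_compose[OF PL_bounded_filterlim_at_top[OF f]])
    show "filterlim s at_top sequentially"
      by (rule filterlim_at_top_mono[OF filterlim_real_sequentially])
         (use s in \<open>auto intro: always_eventually less_imp_le\<close>)
  qed
  show ?thesis
  proof (rule that[OF PL_bounded_in_PLd_set[OF g]])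
    fix h assume h: "h \<in> H_asym"
    show "g \<circ> f \<noteq> h \<circ> f \<circ> g"
    proof
      assume commute: "g \<circ> f = h \<circ> f \<circ> g"
      have h_at: "h (f (s n)) = 2 * f (s n) - s n" for n
        using fun_cong[OF commute, of "s n"] g_at[of n] by simp
      have "((\<lambda>n. h (f (s n)) / f (s n)) \<longlongrightarrow> 1) sequentially"
        by (rule H_asym_ratio_comp[OF h f_s_top])
      moreover have "1 < 1 + \<delta> / (1 + \<delta>)" using \<delta> by simp
      ultimately have "\<forall>\<^sub>F n in sequentially. h (f (s n)) / f (s n) < 1 + \<delta> / (1 + \<delta>)"
        by (rule order_tendstoD(2))
      then obtain n where "h (f (s n)) / f (s n) < 1 + \<delta> / (1 + \<delta>)"
        by (auto simp: eventually_sequentially)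
      then show False using h_at[of n] ratio[of n] by simp
    qed
  qed
qed

lemma frequently_filterlim:
  assumes "\<exists>\<^sub>F x in F. P (f x)" and "filterlim f G F" shows "\<exists>\<^sub>F y in G. P y"
proof -
  have "\<exists>\<^sub>F y in filtermap f F. P y" using assms(1) by (simp add: frequently_filtermap)
  then show ?thesis using assms(2) unfolding filterlim_def frequently_def by (auto dest: filter_leD)
qed

lemma not_in_H_asym_expanding:
  assumes f: "PL_bounded f K" and fH: "f \<notin> H_asym"
  obtains \<delta> where "0 < \<delta>"
    "(\<exists>\<^sub>F x in at_top. (1 + \<delta>) * x \<le> f x) \<or> (\<exists>\<^sub>F x in at_top. (1 + \<delta>) * x \<le> halfline_inv f x)"
proof -
  have "\<not> ((\<lambda>x. f x / x) \<longlongrightarrow> 1) at_top"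
    using fH PL_bounded_in_PLd_set[OF f] by (simp add: H_asym_def)
  then obtain \<delta> where \<delta>: "0 < \<delta>" and far: "\<exists>\<^sub>F x in at_top. \<not> dist (f x / x) 1 < \<delta>"
    by (auto simp: tendsto_iff not_eventually)
  have "\<forall>x. 0 < x \<and> \<not> dist (f x / x) 1 < \<delta> \<longrightarrow> (1 + \<delta>) * x \<le> f x \<or> f x \<le> (1 - \<delta>) * x"
  proof (intro allI impI)
    fix x assume x: "0 < x \<and> \<not> dist (f x / x) 1 < \<delta>"
    then have "1 + \<delta> \<le> f x / x \<or> f x / x \<le> 1 - \<delta>" by (auto simp: dist_real_def)
    then show "(1 + \<delta>) * x \<le> f x \<or> f x \<le> (1 - \<delta>) * x"
      using x by (simp add: pos_le_divide_eq pos_divide_le_eq)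
  qed
  then have "\<exists>\<^sub>F x in at_top. (1 + \<delta>) * x \<le> f x \<or> f x \<le> (1 - \<delta>) * x"
    using frequently_eventually_conj[OF far eventually_gt_at_top[of 0]] by (rule frequently_mono)
  then consider (expanding) "\<exists>\<^sub>F x in at_top. (1 + \<delta>) * x \<le> f x"
    | (contracting) "\<exists>\<^sub>F x in at_top. f x \<le> (1 - \<delta>) * x"
    by (auto simp: frequently_disj_iff)
  then show ?thesis
  proof cases
    case expanding
    then show ?thesis using that \<delta> by blast
  next
    case contracting
    have "\<forall>x. 0 < x \<and> f x \<le> (1 - \<delta>) * x \<longrightarrow> (1 + \<delta>) * f x \<le> halfline_inv f (f x)"
    proof (intro allI impI)
      fix x assume x: "0 < x \<and> f x \<le> (1 - \<delta>) * x"
      then have "(1 + \<delta>) * f x \<le> (1 + \<delta>) * ((1 - \<delta>) * x)" using \<delta> by (intro mult_left_mono) auto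
      also have "\<dots> \<le> x" using x \<delta> by (simp add: algebra_simps)
      finally show "(1 + \<delta>) * f x \<le> halfline_inv f (f x)" by (simp add: halfline_inv_left[OF f])
    qed
    then have "\<exists>\<^sub>F x in at_top. (1 + \<delta>) * f x \<le> halfline_inv f (f x)"
      using frequently_eventually_conj[OF contracting eventually_gt_at_top[of 0]] by (rule frequently_mono)
    then have "\<exists>\<^sub>F y in at_top. (1 + \<delta>) * y \<le> halfline_inv f y"
      using PL_bounded_filterlim_at_top[OF f] by (rule frequently_filterlim)
    then show ?thesis using that \<delta> by blast
  qed
qed

lemma (in group) inv_in_group_center:
  assumes z: "z \<in> group_center G" shows "inv z \<in> group_center G"
proof -
  have zc: "z \<in> carrier G" and comm: "\<And>g. g \<in> carrier G \<Longrightarrow> z \<otimes> g = g \<otimes> z"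
    using z by (auto simp: group_center_def)
  have "inv z \<otimes> g = g \<otimes> inv z" if g: "g \<in> carrier G" for g
  proof -
    have "inv z \<otimes> g = inv z \<otimes> (g \<otimes> z) \<otimes> inv z" using zc g by (simp add: m_assoc)
    also have "\<dots> = g \<otimes> inv z" using zc g by (simp add: comm[OF g, symmetric] m_assoc[symmetric])
    finally show ?thesis .
  qed
  then show ?thesis using zc by (simp add: group_center_def)
qed

lemma expanding_coset_not_central:
  assumes f: "f \<in> PLd_set" and \<delta>: "0 < \<delta>" and expanding: "\<exists>\<^sub>F x in at_top. (1 + \<delta>) * x \<le> f x"
  shows "H_asym #>\<^bsub>PLd\<^esub> f \<notin> group_center (PLd Mod H_asym)"
proof
  assume central: "H_asym #>\<^bsub>PLd\<^esub> f \<in> group_center (PLd Mod H_asym)"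
  interpret normal H_asym PLd by (rule normal_H_asym)
  obtain K where "PL_bounded f K" using f by (rule PLd_set_imp_PL_bounded)
  then obtain g where g: "g \<in> PLd_set" and noncomm: "\<And>h. h \<in> H_asym \<Longrightarrow> g \<circ> f \<noteq> h \<circ> f \<circ> g"
    using expanding_not_commuting \<delta> expanding by blast
  have fc: "f \<in> carrier PLd" and gc: "g \<in> carrier PLd" using f g by (simp_all add: PLd_def)
  have "H_asym #>\<^bsub>PLd\<^esub> g \<in> carrier (PLd Mod H_asym)"
    using gc by (simp add: carrier_FactGroup)
  then have "(H_asym #>\<^bsub>PLd\<^esub> f) <#>\<^bsub>PLd\<^esub> (H_asym #>\<^bsub>PLd\<^esub> g)
      = (H_asym #>\<^bsub>PLd\<^esub> g) <#>\<^bsub>PLd\<^esub> (H_asym #>\<^bsub>PLd\<^esub> f)"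
    using central unfolding group_center_def by auto
  then have "H_asym #>\<^bsub>PLd\<^esub> (f \<otimes>\<^bsub>PLd\<^esub> g) = H_asym #>\<^bsub>PLd\<^esub> (g \<otimes>\<^bsub>PLd\<^esub> f)"
    using fc gc by (simp add: rcos_sum)
  then have "H_asym #>\<^bsub>PLd\<^esub> (f \<circ> g) = H_asym #>\<^bsub>PLd\<^esub> (g \<circ> f)"
    by (simp add: PLd_def)
  moreover have "g \<circ> f \<in> H_asym #>\<^bsub>PLd\<^esub> (g \<circ> f)"
    using rcos_self[of "g \<circ> f"] f g subgroup_axioms by (simp add: PLd_def PLd_set_comp)
  ultimately obtain h where "h \<in> H_asym" "g \<circ> f = h \<circ> (f \<circ> g)"
    by (auto simp: r_coset_def PLd_def)
  then show False using noncomm by (metis comp_assoc)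
qed

theorem theorem3:
  shows "group_center (PLd Mod H_asym) = {\<one>\<^bsub>PLd Mod H_asym\<^esub>}"
proof -
  interpret normal H_asym PLd by (rule normal_H_asym)
  interpret quotient: group "PLd Mod H_asym" by (rule factorgroup_is_group)
  have "z = H_asym" if z: "z \<in> group_center (PLd Mod H_asym)" for z
  proof -
    obtain f where f: "f \<in> PLd_set" and zf: "z = H_asym #>\<^bsub>PLd\<^esub> f"
      using z by (auto simp: group_center_def carrier_FactGroup PLd_def)
    obtain K where fK: "PL_bounded f K" using f by (rule PLd_set_imp_PL_bounded)
    have "z \<in> carrier (PLd Mod H_asym)" using z by (simp add: group_center_def)
    moreover have fc: "f \<in> carrier PLd" using f by (simp add: PLd_def)
    ultimately have "inv\<^bsub>PLd Mod H_asym\<^esub> z = H_asym #>\<^bsub>PLd\<^esub> inv\<^bsub>PLd\<^esub> f"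
      by (simp add: inv_FactGroup zf rcos_inv)
    then have "inv\<^bsub>PLd Mod H_asym\<^esub> z = H_asym #>\<^bsub>PLd\<^esub> halfline_inv f"
      using inv_PLd[OF f] by simp
    then have inv_central: "H_asym #>\<^bsub>PLd\<^esub> halfline_inv f \<in> group_center (PLd Mod H_asym)"
      using quotient.inv_in_group_center[OF z] by simp
    have "f \<in> H_asym"
    proof (rule ccontr)
      assume "f \<notin> H_asym"
      then obtain \<delta> where "0 < \<delta>" and
        "(\<exists>\<^sub>F x in at_top. (1 + \<delta>) * x \<le> f x) \<or> (\<exists>\<^sub>F x in at_top. (1 + \<delta>) * x \<le> halfline_inv f x)"
        by (rule not_in_H_asym_expanding[OF fK])
      then show False
        using expanding_coset_not_central[OF f] expanding_coset_not_central[OF PLd_set_halfline_inv[OF f]]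
          z zf inv_central by blast
    qed
    then show "z = H_asym" using zf coset_join2[OF fc subgroup_axioms] by simp
  qed
  moreover have "\<one>\<^bsub>PLd Mod H_asym\<^esub> \<in> group_center (PLd Mod H_asym)"
    unfolding group_center_def by (simp del: one_FactGroup mult_FactGroup)
  ultimately show ?thesis by auto
qed

end
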